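(* The function \[ F_0(k,a,b,c,d,e) = (-1)^{d+e}\,\frac{\Gamma(a+k)\Gamma(b+k)\Gamma(c+k)}{\Gamma(d+k)\Gamma(e+k)\Gamma(a+b+c-d-e+2+k)} \] \[ \times\frac{\Gamma(a+b-d-e+2)\,\Gamma(a+c-d-e+2)\,\Gamma(b+c-d-e+2)}{\Gamma(a-d+1)\Gamma(a-e+1)\Gamma(b-d+1)\Gamma(b-e+1)\Gamma(c-d+1)\Gamma(c-e+1)} \] is a WZ seed in the variables $a,b,c,d,e$.
   Context: A term $F(n_1,\dots,n_r)$ is hypergeometric in $n_1,\dots,n_r$ if each ratio $F(\dots,n_i+1,\dots)/F(\dots,n_i,\dots)$ is a rational function of $n_1,\dots,n_r$. Write $\Delta_n f(n)=f(n+1)-f(n)$. Two hypergeometric terms $F(n,k),G(n,k)$ form a WZ pair, and $G$ is called a WZ mate of $F$, if $\Delta_n F(n,k)=\Delta_k G(n,k)$. A hypergeometric term $F_0(k,a,b,\dots)$ (hypergeometric in $k,a,b,\dots$) is a WZ seed in the variables $a,b,\dots$ if for all integers $K,A,B,\dots$ and all complex $k_0$ and all values of the parameters $a,b,\dots$, the term $F(n,k)=F_0(Kn+k_0+k,\,An+a,\,Bn+b,\dots)$ has a WZ mate $G(n,k)$ (a hypergeometric term). Factors such as $(-1)^x$ or $z^x$ with non-integer exponent $x$ are understood as hypergeometric factors satisfying $(-1)^{x+1}=-(-1)^x$, $z^{x+1}=z\cdot z^x$ (e.g. defined via a fixed branch of the exponential). *)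

theory Defs
  imports "HOL-Analysis.Analysis" "HOL-Computational_Algebra.Polynomial"
begin

text \<open>Bivariate polynomials over the complex numbers are represented as
  \<open>complex poly poly\<close>; the outer variable is \<open>n\<close>, the inner one \<open>k\<close>.\<close>
definition biv :: "complex poly poly \<Rightarrow> int \<Rightarrow> int \<Rightarrow> complex" where
  "biv P n k = poly (poly P [:of_int n:]) (of_int k)"

definition hypergeometric2 :: "(int \<Rightarrow> int \<Rightarrow> complex) \<Rightarrow> bool" where
  "hypergeometric2 F \<longleftrightarrow>
     (\<exists>p q. q \<noteq> 0 \<and> (\<forall>n k. biv q n k * F (n + 1) k = biv p n k * F n k)) \<and>
     (\<exists>p q. q \<noteq> 0 \<and> (\<forall>n k. biv q n k * F n (k + 1) = biv p n k * F n k))"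

definition wz_mate :: "(int \<Rightarrow> int \<Rightarrow> complex) \<Rightarrow> (int \<Rightarrow> int \<Rightarrow> complex) \<Rightarrow> bool" where
  "wz_mate F G \<longleftrightarrow> hypergeometric2 G \<and>
     (\<forall>n k. F (n + 1) k - F n k = G n (k + 1) - G n k)"

text \<open>The seed is given as a partial function
  (\<open>None\<close> where some Gamma factor of the numerator hits a pole); the WZ-seed
  property is required for every specialisation that yields a term defined on
  all of \<open>\<int>\<^sup>2\<close>.\<close>
definition wz_seed5 ::
  "(complex \<Rightarrow> complex \<Rightarrow> complex \<Rightarrow> complex \<Rightarrow> complex \<Rightarrow> complex \<Rightarrow> complex option) \<Rightarrow> bool" where
  "wz_seed5 F0 \<longleftrightarrow>
     (\<forall>(K::int) (A::int) (B::int) (C::int) (D::int) (E::int) (k0::complex) a b c d e.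
        let F = (\<lambda>(n::int) (k::int). F0 (of_int K * of_int n + k0 + of_int k)
                   (of_int A * of_int n + a) (of_int B * of_int n + b) (of_int C * of_int n + c)
                   (of_int D * of_int n + d) (of_int E * of_int n + e))
        in (\<forall>n k. F n k \<noteq> None) \<longrightarrow> (\<exists>G. wz_mate (\<lambda>n k. the (F n k)) G))"

text \<open>The hypergeometric factor \<open>(-1)^x\<close> for complex \<open>x\<close>, via the fixed branch
  \<open>exp(i\<pi>x)\<close>; it satisfies \<open>(-1)^(x+1) = -(-1)^x\<close>.\<close>
definition m1pow :: "complex \<Rightarrow> complex" where
  "m1pow x = exp (complex_of_real pi * \<i> * x)"

text \<open>The seed \<open>F\<^sub>0(k,a,b,c,d,e)\<close>.  Reciprocal Gamma factors use the entire
  function \<open>rGamma\<close>; the term is undefined when a numerator Gamma has a pole.\<close>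
definition seedF0 :: "complex \<Rightarrow> complex \<Rightarrow> complex \<Rightarrow> complex \<Rightarrow> complex \<Rightarrow> complex \<Rightarrow> complex option" where
  "seedF0 k a b c d e =
     (if {a + k, b + k, c + k, a + b - d - e + 2, a + c - d - e + 2, b + c - d - e + 2}
           \<inter> \<int>\<^sub>\<le>\<^sub>0 = {}
      then Some (m1pow (d + e)
        * Gamma (a + k) * Gamma (b + k) * Gamma (c + k)
        * rGamma (d + k) * rGamma (e + k) * rGamma (a + b + c - d - e + 2 + k)
        * Gamma (a + b - d - e + 2) * Gamma (a + c - d - e + 2) * Gamma (b + c - d - e + 2)
        * rGamma (a - d + 1) * rGamma (a - e + 1) * rGamma (b - d + 1)
        * rGamma (b - e + 1) * rGamma (c - d + 1) * rGamma (c - e + 1))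
      else None)"

end

theory Submission
  imports Defs
begin

text \<open>Each unit shift of a parameter of the seed \<open>F\<^sub>0\<close> is a difference in \<open>k\<close>: with explicit Gamma-ratio
  certificates, \<open>F\<^sub>0(a+1) - F\<^sub>0(a) = cert_a(k+1) - cert_a(k)\<close>, and likewise for \<open>b, c, d, e\<close>, while a
  shift of \<open>k\<close> is trivially such a difference. For a specialisation \<open>F(n,k) = F\<^sub>0(Kn+k\<^sub>0+k, An+a, \<dots>)\<close>
  the difference \<open>F(n+1,k) - F(n,k)\<close> therefore telescopes along a lattice path of integer offsets of the
  parameters from \<open>0\<close> to \<open>(K,A,B,C,D,E)\<close>, and summing the certificates along the path gives the mate
  \<open>G\<close>. The path runs through a corner \<open>(0,M,M,M,-M,-M)\<close> with \<open>M\<close> large, so that no numerator Gamma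
  function meets a pole. Every summand of \<open>G\<close> is a polynomial in \<open>n, k\<close> times one fixed Gamma ratio,
  which is hypergeometric; hence so is \<open>G\<close>.\<close>

section \<open>Polynomial functions on \<open>\<int>\<^sup>2\<close>\<close>

inductive polyfun2 :: "(int \<Rightarrow> int \<Rightarrow> complex) \<Rightarrow> bool" where
  polyfun2_const: "polyfun2 (\<lambda>n k. c)"
| polyfun2_var_n: "polyfun2 (\<lambda>n k. of_int n)"
| polyfun2_var_k: "polyfun2 (\<lambda>n k. of_int k)"
| polyfun2_add: "polyfun2 f \<Longrightarrow> polyfun2 g \<Longrightarrow> polyfun2 (\<lambda>n k. f n k + g n k)"
| polyfun2_mult: "polyfun2 f \<Longrightarrow> polyfun2 g \<Longrightarrow> polyfun2 (\<lambda>n k. f n k * g n k)"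

lemma polyfun2_uminus: "polyfun2 f \<Longrightarrow> polyfun2 (\<lambda>n k. - f n k)"
  using polyfun2_mult[OF polyfun2_const[of "-1"]] by simp

lemma polyfun2_diff: "polyfun2 f \<Longrightarrow> polyfun2 g \<Longrightarrow> polyfun2 (\<lambda>n k. f n k - g n k)"
  using polyfun2_add[OF _ polyfun2_uminus] by simp

lemma polyfun2_shift_n: "polyfun2 f \<Longrightarrow> polyfun2 (\<lambda>n k. f (n + 1) k)"
  by (induction rule: polyfun2.induct) (auto intro: polyfun2.intros)

lemma polyfun2_transpose: "polyfun2 f \<Longrightarrow> polyfun2 (\<lambda>n k. f k n)"
  by (induction rule: polyfun2.induct) (auto intro: polyfun2.intros)

lemma polyfun2_pochhammer: "polyfun2 f \<Longrightarrow> polyfun2 (\<lambda>n k. pochhammer (f n k) m)"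
proof (induction m)
  case (Suc m)
  then show ?case
    unfolding pochhammer_rec' by (intro polyfun2_mult polyfun2_add polyfun2_const)
qed (simp add: polyfun2_const)

lemma polyfun2_biv: "polyfun2 f \<Longrightarrow> \<exists>P. \<forall>n k. f n k = biv P n k"
proof (induction rule: polyfun2.induct)
  case (polyfun2_const c)
  show ?case by (rule exI[of _ "[:[:c:]:]"]) (simp add: biv_def)
next
  case polyfun2_var_n
  show ?case by (rule exI[of _ "[:0, 1:]"]) (simp add: biv_def)
next
  case polyfun2_var_k
  show ?case by (rule exI[of _ "[:[:0, 1:]:]"]) (simp add: biv_def)
next
  case (polyfun2_add f g)
  then obtain P Q where "\<forall>n k. f n k = biv P n k" "\<forall>n k. g n k = biv Q n k" by blast
  then show ?case by (intro exI[of _ "P + Q"]) (simp add: biv_def)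
next
  case (polyfun2_mult f g)
  then obtain P Q where "\<forall>n k. f n k = biv P n k" "\<forall>n k. g n k = biv Q n k" by blast
  then show ?case by (intro exI[of _ "P * Q"]) (simp add: biv_def)
qed

lemma biv_eq_0_iff: "(\<forall>n k. biv P n k = 0) \<longleftrightarrow> P = 0"
proof
  assume vanish: "\<forall>n k. biv P n k = 0"
  have "infinite (range (of_int :: int \<Rightarrow> complex))"
    using finite_imageD[of "of_int :: int \<Rightarrow> complex" UNIV] infinite_UNIV_int
    by (auto simp: inj_on_def)
  then have slices: "poly P [:of_int n:] = 0" for n
  proof -
    have "range of_int \<subseteq> {x. poly (poly P [:of_int n:]) x = 0}"
      using vanish by (auto simp: biv_def)
    with \<open>infinite (range of_int)\<close> show ?thesis
      using poly_roots_finite finite_subset by blast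
  qed
  have "infinite (range (\<lambda>n::int. [:of_int n :: complex:]))"
    using finite_imageD[of "\<lambda>n::int. [:of_int n :: complex:]" UNIV] infinite_UNIV_int
    by (auto simp: inj_on_def)
  moreover have "range (\<lambda>n. [:of_int n:]) \<subseteq> {X. poly P X = 0}"
    using slices by auto
  ultimately show "P = 0"
    using poly_roots_finite finite_subset by blast
qed (simp add: biv_def)

lemma polyfun2_nonzero_mult:
  assumes "polyfun2 f" "polyfun2 g" "\<exists>n k. f n k \<noteq> 0" "\<exists>n k. g n k \<noteq> 0"
  shows "\<exists>n k. f n k * g n k \<noteq> 0"
proof -
  obtain P Q where "\<forall>n k. f n k = biv P n k" "\<forall>n k. g n k = biv Q n k"
    using assms(1,2) polyfun2_biv by metis
  with assms(3,4) have "P \<noteq> 0" "Q \<noteq> 0" by (auto simp: biv_def)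
  then have "\<not> (\<forall>n k. biv (P * Q) n k = 0)" using biv_eq_0_iff by simp
  with \<open>\<forall>n k. f n k = biv P n k\<close> \<open>\<forall>n k. g n k = biv Q n k\<close> show ?thesis
    by (simp add: biv_def)
qed

section \<open>Hypergeometric terms and their polynomial multiples\<close>

text \<open>Hypergeometric in the direction of \<open>n\<close>; the direction of \<open>k\<close> is reduced to it by transposition
  (\<open>hypergeometric2I\<close>). Requiring \<open>q\<close> to be nonzero at a single point suffices by \<open>biv_eq_0_iff\<close>.\<close>

definition hypergeometric_n :: "(int \<Rightarrow> int \<Rightarrow> complex) \<Rightarrow> bool" where
  "hypergeometric_n G \<longleftrightarrow> (\<exists>p q. polyfun2 p \<and> polyfun2 q \<and> (\<exists>n k. q n k \<noteq> 0) \<and>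
     (\<forall>n k. q n k * G (n + 1) k = p n k * G n k))"

lemma hypergeometric_nI:
  assumes "polyfun2 p" "polyfun2 q" "q n0 k0 \<noteq> 0" "\<And>n k. q n k * G (n + 1) k = p n k * G n k"
  shows "hypergeometric_n G"
  unfolding hypergeometric_n_def using assms by blast

lemma hypergeometric2I:
  assumes "hypergeometric_n G" "hypergeometric_n (\<lambda>n k. G k n)"
  shows "hypergeometric2 G"
proof -
  obtain p q where pq: "polyfun2 p" "polyfun2 q" "\<exists>n k. q n k \<noteq> 0"
    "\<forall>n k. q n k * G (n + 1) k = p n k * G n k"
    using assms(1) unfolding hypergeometric_n_def by blast
  obtain p' q' where pq': "polyfun2 p'" "polyfun2 q'" "\<exists>n k. q' n k \<noteq> 0"
    "\<forall>n k. q' n k * G k (n + 1) = p' n k * G k n"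
    using assms(2) unfolding hypergeometric_n_def by blast
  obtain P Q where PQ: "\<forall>n k. p n k = biv P n k" "\<forall>n k. q n k = biv Q n k"
    using pq(1,2) polyfun2_biv by metis
  obtain P' Q' where PQ': "\<forall>n k. p' k n = biv P' n k" "\<forall>n k. q' k n = biv Q' n k"
    using pq'(1,2) polyfun2_biv polyfun2_transpose by metis
  have "Q \<noteq> 0" "Q' \<noteq> 0"
    using pq(3) pq'(3) PQ(2) PQ'(2) by (auto simp: biv_def)
  moreover have "biv Q n k * G (n + 1) k = biv P n k * G n k" for n k
    using pq(4) PQ by simp
  moreover have "biv Q' n k * G n (k + 1) = biv P' n k * G n k" for n k
    using pq'(4)[rule_format, of k n] PQ' by simp
  ultimately show ?thesis
    unfolding hypergeometric2_def by blast
qed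

lemma hypergeometric_n_mult:
  assumes "hypergeometric_n f" "hypergeometric_n g"
  shows "hypergeometric_n (\<lambda>n k. f n k * g n k)"
proof -
  obtain p q where f: "polyfun2 p" "polyfun2 q" "\<exists>n k. q n k \<noteq> 0"
    "\<forall>n k. q n k * f (n + 1) k = p n k * f n k"
    using assms(1) unfolding hypergeometric_n_def by blast
  obtain p' q' where g: "polyfun2 p'" "polyfun2 q'" "\<exists>n k. q' n k \<noteq> 0"
    "\<forall>n k. q' n k * g (n + 1) k = p' n k * g n k"
    using assms(2) unfolding hypergeometric_n_def by blast
  have "(q n k * q' n k) * (f (n + 1) k * g (n + 1) k) = (p n k * p' n k) * (f n k * g n k)" for n k
  proof -
    have "(q n k * q' n k) * (f (n + 1) k * g (n + 1) k)
        = (q n k * f (n + 1) k) * (q' n k * g (n + 1) k)" by (simp only: ac_simps)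
    also have "\<dots> = (p n k * f n k) * (p' n k * g n k)"
      by (simp only: f(4)[rule_format] g(4)[rule_format])
    finally show ?thesis by (simp only: ac_simps)
  qed
  moreover obtain n0 k0 where "q n0 k0 * q' n0 k0 \<noteq> 0"
    using f(2,3) g(2,3) polyfun2_nonzero_mult by blast
  ultimately show ?thesis
    using f(1,2) g(1,2) by (intro hypergeometric_nI[of "\<lambda>n k. p n k * p' n k" "\<lambda>n k. q n k * q' n k"])
      (auto intro: polyfun2_mult)
qed

lemma hypergeometric_n_inverse:
  assumes "hypergeometric_n f" "\<And>n k. f n k \<noteq> 0"
  shows "hypergeometric_n (\<lambda>n k. inverse (f n k))"
proof -
  obtain p q n0 k0 where pq: "polyfun2 p" "polyfun2 q" "q n0 k0 \<noteq> 0"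
    "\<forall>n k. q n k * f (n + 1) k = p n k * f n k"
    using assms(1) unfolding hypergeometric_n_def by blast
  have "p n0 k0 * f n0 k0 \<noteq> 0"
    using pq(3,4) assms(2) by (metis mult_eq_0_iff)
  then have "p n0 k0 \<noteq> 0" by simp
  moreover have "p n k * inverse (f (n + 1) k) = q n k * inverse (f n k)" for n k
    using pq(4)[rule_format, of n k] assms(2)[of n k] assms(2)[of "n + 1" k]
    by (simp add: field_simps)
  ultimately show ?thesis
    using pq(1,2) by (intro hypergeometric_nI[of q p]) auto
qed

definition poly_multiple :: "(int \<Rightarrow> int \<Rightarrow> complex) \<Rightarrow> (int \<Rightarrow> int \<Rightarrow> complex) \<Rightarrow> bool" where
  "poly_multiple g B \<longleftrightarrow> (\<exists>p. polyfun2 p \<and> (\<forall>n k. g n k = p n k * B n k))"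

lemma poly_multipleI: "polyfun2 p \<Longrightarrow> (\<And>n k. g n k = p n k * B n k) \<Longrightarrow> poly_multiple g B"
  unfolding poly_multiple_def by blast

lemma poly_multiple_zero: "poly_multiple (\<lambda>n k. 0) B"
  by (rule poly_multipleI[OF polyfun2_const[of 0]]) simp

lemma poly_multiple_add:
  assumes "poly_multiple f B" "poly_multiple g B"
  shows "poly_multiple (\<lambda>n k. f n k + g n k) B"
proof -
  obtain p q where "polyfun2 p" "\<forall>n k. f n k = p n k * B n k" "polyfun2 q" "\<forall>n k. g n k = q n k * B n k"
    using assms unfolding poly_multiple_def by blast
  then show ?thesis
    by (intro poly_multipleI[of "\<lambda>n k. p n k + q n k"] polyfun2_add) (simp_all add: distrib_right)
qed

lemma poly_multiple_scale:
  assumes "polyfun2 h" "poly_multiple g B"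
  shows "poly_multiple (\<lambda>n k. h n k * g n k) B"
proof -
  obtain p where "polyfun2 p" "\<forall>n k. g n k = p n k * B n k"
    using assms(2) unfolding poly_multiple_def by blast
  with assms(1) show ?thesis
    by (intro poly_multipleI[of "\<lambda>n k. h n k * p n k"] polyfun2_mult) (simp_all add: mult.assoc)
qed

lemma poly_multiple_uminus: "poly_multiple g B \<Longrightarrow> poly_multiple (\<lambda>n k. - g n k) B"
  using poly_multiple_scale[OF polyfun2_const[of "-1"]] by simp

lemma poly_multiple_mult:
  assumes "poly_multiple f B" "poly_multiple g C"
  shows "poly_multiple (\<lambda>n k. f n k * g n k) (\<lambda>n k. B n k * C n k)"
proof -
  obtain p q where "polyfun2 p" "\<forall>n k. f n k = p n k * B n k" "polyfun2 q" "\<forall>n k. g n k = q n k * C n k"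
    using assms unfolding poly_multiple_def by blast
  then show ?thesis
    by (intro poly_multipleI[of "\<lambda>n k. p n k * q n k"] polyfun2_mult) (simp_all add: ac_simps)
qed

lemma poly_multiple_transpose: "poly_multiple g B \<Longrightarrow> poly_multiple (\<lambda>n k. g k n) (\<lambda>n k. B k n)"
  unfolding poly_multiple_def using polyfun2_transpose by blast

lemma hypergeometric_n_poly_multiple:
  assumes B: "hypergeometric_n B" and g: "poly_multiple g B"
  shows "hypergeometric_n g"
proof -
  obtain f where f: "polyfun2 f" "\<forall>n k. g n k = f n k * B n k"
    using g unfolding poly_multiple_def by blast
  show ?thesis
  proof (cases "\<forall>n k. f n k = 0")
    case True
    then show ?thesis
      using f(2) by (intro hypergeometric_nI[of "\<lambda>n k. 0" "\<lambda>n k. 1"]) (auto intro: polyfun2_const)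
  next
    case False
    obtain p q where pq: "polyfun2 p" "polyfun2 q" "\<exists>n k. q n k \<noteq> 0"
      "\<forall>n k. q n k * B (n + 1) k = p n k * B n k"
      using B unfolding hypergeometric_n_def by blast
    have "(f n k * q n k) * g (n + 1) k = (f (n + 1) k * p n k) * g n k" for n k
    proof -
      have "(f n k * q n k) * g (n + 1) k = f n k * f (n + 1) k * (q n k * B (n + 1) k)"
        by (simp only: f(2)[rule_format] ac_simps)
      also have "\<dots> = f n k * f (n + 1) k * (p n k * B n k)"
        by (simp only: pq(4)[rule_format])
      also have "\<dots> = (f (n + 1) k * p n k) * g n k"
        by (simp only: f(2)[rule_format] ac_simps)
      finally show ?thesis .
    qed
    moreover obtain n0 k0 where "f n0 k0 * q n0 k0 \<noteq> 0"
      using False f(1) pq(2,3) polyfun2_nonzero_mult by blast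
    ultimately show ?thesis
      using f(1) pq(1,2)
      by (intro hypergeometric_nI[of "\<lambda>n k. f (n + 1) k * p n k" "\<lambda>n k. f n k * q n k"])
        (auto intro: polyfun2_mult polyfun2_shift_n)
  qed
qed

lemma hypergeometric2_poly_multiple:
  assumes "hypergeometric_n B" "hypergeometric_n (\<lambda>n k. B k n)" "poly_multiple g B"
  shows "hypergeometric2 g"
proof (rule hypergeometric2I)
  show "hypergeometric_n g"
    using assms(1,3) by (rule hypergeometric_n_poly_multiple)
  show "hypergeometric_n (\<lambda>n k. g k n)"
    using assms(2) poly_multiple_transpose[OF assms(3)] by (rule hypergeometric_n_poly_multiple)
qed

section \<open>Gamma functions of affine forms\<close>

definition affine_form :: "int \<Rightarrow> int \<Rightarrow> complex \<Rightarrow> int \<Rightarrow> int \<Rightarrow> complex" where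
  "affine_form u v c n k = of_int u * of_int n + of_int v * of_int k + c"

lemma affine_form_shift_n: "affine_form u v c (n + 1) k = affine_form u v c n k + of_int u"
  by (simp add: affine_form_def algebra_simps)

lemma affine_form_add_const: "affine_form u v c n k + z = affine_form u v (c + z) n k"
  by (simp add: affine_form_def algebra_simps)

lemma polyfun2_affine_form: "polyfun2 (affine_form u v c)"
  unfolding affine_form_def[abs_def] by (intro polyfun2.intros)

lemma ex_affine_form_notin_nonpos_Ints:
  assumes "0 < u"
  shows "\<exists>n. affine_form u v c n 0 \<notin> \<int>\<^sub>\<le>\<^sub>0"
proof
  define n where "n = \<lceil>\<bar>Re c\<bar>\<rceil> + 1"
  have n: "\<bar>Re c\<bar> < real_of_int n"
    unfolding n_def by linarith
  then have "1 * real_of_int n \<le> real_of_int u * real_of_int n"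
    using assms by (intro mult_right_mono) auto
  moreover have "Re (affine_form u v c n 0) = real_of_int u * real_of_int n + Re c"
    by (simp add: affine_form_def)
  ultimately have "0 < Re (affine_form u v c n 0)"
    using n by linarith
  then show "affine_form u v c n 0 \<notin> \<int>\<^sub>\<le>\<^sub>0"
    by (auto elim!: nonpos_Ints_cases)
qed

lemma affine_form_swap: "affine_form u v c k n = affine_form v u c n k"
  by (simp add: affine_form_def algebra_simps)

lemma nonpos_Ints_add_nonneg:
  assumes "(z::complex) \<notin> \<int>\<^sub>\<le>\<^sub>0" "0 \<le> j"
  shows "z + of_int j \<notin> \<int>\<^sub>\<le>\<^sub>0"
proof
  assume "z + of_int j \<in> \<int>\<^sub>\<le>\<^sub>0"
  then obtain m where "z + of_int j = of_int m" "m \<le> 0"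
    by (auto elim!: nonpos_Ints_cases)
  then have "z = of_int (m - j)" "m - j \<le> 0"
    using assms(2) by (simp_all add: algebra_simps)
  then show False
    using assms(1) nonpos_Ints_of_int by metis
qed

lemma affine_form_shift_notin_nonpos_Ints:
  assumes "\<And>n k. affine_form u v c n k \<notin> \<int>\<^sub>\<le>\<^sub>0" "min 0 u \<le> j"
  shows "affine_form u v c n k + of_int j \<notin> \<int>\<^sub>\<le>\<^sub>0"
proof (cases "0 \<le> j")
  case True
  then show ?thesis using assms(1) by (rule nonpos_Ints_add_nonneg[rotated])
next
  case False
  then have "0 \<le> j - u" using assms(2) by linarith
  moreover have "affine_form u v c n k + of_int j = affine_form u v c (n + 1) k + of_int (j - u)"
    by (simp add: affine_form_shift_n)
  ultimately show ?thesis using assms(1) nonpos_Ints_add_nonneg by metis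
qed

lemma affine_form_shift_k: "affine_form u 1 c n k + of_int j = affine_form u 1 c n (k + j)"
  by (simp add: affine_form_def algebra_simps)

lemma hypergeometric_n_rGamma: "hypergeometric_n (\<lambda>n k. rGamma (affine_form u v c n k))"
proof (cases "0 \<le> u")
  case True
  define m where "m = nat u"
  have shift: "affine_form u v c (n + 1) k = affine_form u v c n k + of_nat m" for n k
    using True by (simp add: m_def affine_form_shift_n)
  obtain n0 where "pochhammer (affine_form u v c n0 0) m \<noteq> 0"
  proof (cases "u = 0")
    case True
    then show ?thesis using that by (simp add: m_def)
  next
    case False
    then obtain n0 where "affine_form u v c n0 0 \<notin> \<int>\<^sub>\<le>\<^sub>0"
      using \<open>0 \<le> u\<close> ex_affine_form_notin_nonpos_Ints by fastforce
    then have "pochhammer (affine_form u v c n0 0) m \<noteq> 0"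
      by (auto simp: pochhammer_eq_0_iff)
    with that show ?thesis .
  qed
  then show ?thesis
    by (intro hypergeometric_nI[of "\<lambda>n k. 1" "\<lambda>n k. pochhammer (affine_form u v c n k) m"])
      (auto simp: shift pochhammer_rGamma[symmetric] intro: polyfun2_const polyfun2_pochhammer
        polyfun2_affine_form)
next
  case False
  define m where "m = nat (- u)"
  have "affine_form u v c (n + 1) k + of_nat m = affine_form u v c n k" for n k
    using False by (simp add: m_def affine_form_shift_n)
  then have "1 * rGamma (affine_form u v c (n + 1) k)
      = pochhammer (affine_form u v c (n + 1) k) m * rGamma (affine_form u v c n k)" for n k
    using pochhammer_rGamma[of "affine_form u v c (n + 1) k" m] by simp
  then show ?thesis
    by (intro hypergeometric_nI[of "\<lambda>n k. pochhammer (affine_form u v c (n + 1) k) m" "\<lambda>n k. 1"]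
        polyfun2_pochhammer[OF polyfun2_shift_n[OF polyfun2_affine_form]] polyfun2_const) auto
qed

lemma hypergeometric_n_Gamma:
  assumes "\<And>n k. affine_form u v c n k \<notin> \<int>\<^sub>\<le>\<^sub>0"
  shows "hypergeometric_n (\<lambda>n k. Gamma (affine_form u v c n k))"
  unfolding Gamma_def
  by (rule hypergeometric_n_inverse[OF hypergeometric_n_rGamma]) (simp add: assms rGamma_eq_zero_iff)

lemma m1pow_add: "m1pow (x + y) = m1pow x * m1pow y"
  by (simp add: m1pow_def algebra_simps exp_add)

lemma hypergeometric_n_m1pow: "hypergeometric_n (\<lambda>n k. m1pow (affine_form u v c n k))"
  by (rule hypergeometric_nI[of "\<lambda>n k. m1pow (of_int u)" "\<lambda>n k. 1"])
    (simp_all add: affine_form_shift_n m1pow_add polyfun2_const)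

lemma hypergeometric_n_rGamma_swap: "hypergeometric_n (\<lambda>n k. rGamma (affine_form u v c k n))"
  unfolding affine_form_swap[of u v] by (rule hypergeometric_n_rGamma)

lemma hypergeometric_n_Gamma_swap:
  "(\<And>n k. affine_form u v c k n \<notin> \<int>\<^sub>\<le>\<^sub>0) \<Longrightarrow> hypergeometric_n (\<lambda>n k. Gamma (affine_form u v c k n))"
  unfolding affine_form_swap[of u v] by (rule hypergeometric_n_Gamma)

lemma hypergeometric_n_m1pow_swap: "hypergeometric_n (\<lambda>n k. m1pow (affine_form u v c k n))"
  unfolding affine_form_swap[of u v] by (rule hypergeometric_n_m1pow)

lemma poly_multiple_Gamma_shift:
  assumes "polyfun2 y" "\<And>n k. y n k + of_int lo \<notin> \<int>\<^sub>\<le>\<^sub>0" "lo \<le> j"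
  shows "poly_multiple (\<lambda>n k. Gamma (y n k + of_int j)) (\<lambda>n k. Gamma (y n k + of_int lo))"
proof (rule poly_multipleI)
  show "polyfun2 (\<lambda>n k. pochhammer (y n k + of_int lo) (nat (j - lo)))"
    by (intro polyfun2_pochhammer polyfun2_add assms(1) polyfun2_const)
  fix n k
  have "y n k + of_int j = (y n k + of_int lo) + of_nat (nat (j - lo))"
    using assms(3) by simp
  then show "Gamma (y n k + of_int j) = pochhammer (y n k + of_int lo) (nat (j - lo)) * Gamma (y n k + of_int lo)"
    using pochhammer_Gamma[OF assms(2), of n k "nat (j - lo)"] Gamma_nonzero[OF assms(2), of n k]
    by (simp add: field_simps)
qed

lemma poly_multiple_rGamma_shift:
  assumes "polyfun2 y" "j \<le> hi"
  shows "poly_multiple (\<lambda>n k. rGamma (y n k + of_int j)) (\<lambda>n k. rGamma (y n k + of_int hi))"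
proof (rule poly_multipleI)
  show "polyfun2 (\<lambda>n k. pochhammer (y n k + of_int j) (nat (hi - j)))"
    by (intro polyfun2_pochhammer polyfun2_add assms(1) polyfun2_const)
  fix n k
  have "y n k + of_int hi = (y n k + of_int j) + of_nat (nat (hi - j))"
    using assms(2) by simp
  then show "rGamma (y n k + of_int j) = pochhammer (y n k + of_int j) (nat (hi - j)) * rGamma (y n k + of_int hi)"
    by (simp only: pochhammer_rGamma[symmetric])
qed

lemma poly_multiple_m1pow_shift:
  "poly_multiple (\<lambda>n k. m1pow (y n k + of_int j)) (\<lambda>n k. m1pow (y n k + of_int j'))"
proof (rule poly_multipleI[OF polyfun2_const[of "m1pow (of_int (j - j'))"]])
  fix n k
  have "y n k + of_int j = of_int (j - j') + (y n k + of_int j')" by simp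
  then show "m1pow (y n k + of_int j) = m1pow (of_int (j - j')) * m1pow (y n k + of_int j')"
    by (simp only: m1pow_add)
qed

lemma poly_multiple_prod_Gamma_shift:
  assumes "list_all2 (\<lambda>y lo. polyfun2 y \<and> (\<forall>n k. y n k + of_int lo \<notin> \<int>\<^sub>\<le>\<^sub>0)) ys los"
    and "list_all2 (\<le>) los js"
  shows "poly_multiple (\<lambda>n k. \<Prod>g\<leftarrow>map2 (\<lambda>y j. y n k + of_int j) ys js. Gamma g)
    (\<lambda>n k. \<Prod>g\<leftarrow>map2 (\<lambda>y j. y n k + of_int j) ys los. Gamma g)"
  using assms
proof (induction ys los arbitrary: js rule: list_all2_induct)
  case Nil
  then show ?case by (simp add: poly_multipleI[OF polyfun2_const[of 1]])
next
  case (Cons y ys lo los)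
  then obtain j js' where "js = j # js'" "lo \<le> j" "list_all2 (\<le>) los js'"
    by (auto simp: list_all2_Cons1)
  with Cons show ?case
    by (simp add: poly_multiple_mult poly_multiple_Gamma_shift)
qed

lemma poly_multiple_prod_rGamma_shift:
  assumes "list_all2 (\<le>) js his" "list_all polyfun2 ys"
  shows "poly_multiple (\<lambda>n k. \<Prod>r\<leftarrow>map2 (\<lambda>y j. y n k + of_int j) ys js. rGamma r)
    (\<lambda>n k. \<Prod>r\<leftarrow>map2 (\<lambda>y j. y n k + of_int j) ys his. rGamma r)"
  using assms
proof (induction js his arbitrary: ys rule: list_all2_induct)
  case (Cons j js hi his)
  then show ?case
    by (cases ys) (simp_all add: poly_multiple_mult poly_multiple_rGamma_shift poly_multipleI[OF polyfun2_const[of 1]])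
qed (simp add: poly_multipleI[OF polyfun2_const[of 1]])

section \<open>Differences in \<open>k\<close>\<close>

definition k_exact :: "(int \<Rightarrow> int \<Rightarrow> complex) \<Rightarrow> (int \<Rightarrow> int \<Rightarrow> complex) \<Rightarrow> bool" where
  "k_exact B F \<longleftrightarrow> (\<exists>G. poly_multiple G B \<and> (\<forall>n k. F n k = G n (k + 1) - G n k))"

lemma k_exactI: "poly_multiple G B \<Longrightarrow> (\<And>n k. F n k = G n (k + 1) - G n k) \<Longrightarrow> k_exact B F"
  unfolding k_exact_def by blast

lemma k_exact_add:
  assumes "k_exact B F" "k_exact B F'"
  shows "k_exact B (\<lambda>n k. F n k + F' n k)"
proof -
  obtain G G' where "poly_multiple G B" "\<forall>n k. F n k = G n (k + 1) - G n k"
    "poly_multiple G' B" "\<forall>n k. F' n k = G' n (k + 1) - G' n k"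
    using assms unfolding k_exact_def by blast
  then show ?thesis
    by (intro k_exactI[of "\<lambda>n k. G n k + G' n k"] poly_multiple_add) simp_all
qed

lemma k_exact_uminus:
  assumes "k_exact B F"
  shows "k_exact B (\<lambda>n k. - F n k)"
proof -
  obtain G where "poly_multiple G B" "\<forall>n k. F n k = G n (k + 1) - G n k"
    using assms unfolding k_exact_def by blast
  then show ?thesis
    by (intro k_exactI[of "\<lambda>n k. - G n k"] poly_multiple_uminus) simp_all
qed

lemma k_exact_telescope:
  fixes \<phi> :: "int \<Rightarrow> int \<Rightarrow> int \<Rightarrow> complex"
  assumes steps: "\<And>j. min i i' \<le> j \<Longrightarrow> j < max i i' \<Longrightarrow> k_exact B (\<lambda>n k. \<phi> (j + 1) n k - \<phi> j n k)"
  shows "k_exact B (\<lambda>n k. \<phi> i' n k - \<phi> i n k)"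
proof -
  have upward: "k_exact B (\<lambda>n k. \<phi> m n k - \<phi> lo n k)"
    if "lo \<le> m" "\<And>j. lo \<le> j \<Longrightarrow> j < m \<Longrightarrow> k_exact B (\<lambda>n k. \<phi> (j + 1) n k - \<phi> j n k)"
    for lo m
    using that
  proof (induction m rule: int_ge_induct)
    case base
    show ?case by (rule k_exactI[OF poly_multiple_zero]) simp
  next
    case (step m)
    then have "k_exact B (\<lambda>n k. (\<phi> (m + 1) n k - \<phi> m n k) + (\<phi> m n k - \<phi> lo n k))"
      by (intro k_exact_add) auto
    then show ?case by simp
  qed
  show ?thesis
  proof (cases "i \<le> i'")
    case True
    then show ?thesis using upward[of i i'] steps by simp
  next
    case False
    then have "k_exact B (\<lambda>n k. - (\<phi> i n k - \<phi> i' n k))"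
      using upward[of i' i] steps by (intro k_exact_uminus) simp
    then show ?thesis by simp
  qed
qed

section \<open>The seed and its certificates\<close>

definition gamma_ratio :: "complex \<Rightarrow> complex list \<Rightarrow> complex list \<Rightarrow> complex" where
  "gamma_ratio w gs rs = m1pow w * (\<Prod>g\<leftarrow>gs. Gamma g) * (\<Prod>r\<leftarrow>rs. rGamma r)"

definition seed :: "complex \<Rightarrow> complex \<Rightarrow> complex \<Rightarrow> complex \<Rightarrow> complex \<Rightarrow> complex \<Rightarrow> complex" where
  "seed k a b c d e = gamma_ratio (d + e)
     [a + k, b + k, c + k, a + b - d - e + 2, a + c - d - e + 2, b + c - d - e + 2]
     [d + k, e + k, a + b + c - d - e + 2 + k,
      a - d + 1, a - e + 1, b - d + 1, b - e + 1, c - d + 1, c - e + 1]"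

definition seed_regular :: "complex \<Rightarrow> complex \<Rightarrow> complex \<Rightarrow> complex \<Rightarrow> complex \<Rightarrow> complex \<Rightarrow> bool" where
  "seed_regular k a b c d e \<longleftrightarrow>
     {a + k, b + k, c + k, a + b - d - e + 2, a + c - d - e + 2, b + c - d - e + 2} \<inter> \<int>\<^sub>\<le>\<^sub>0 = {}"

lemma seedF0_eq_seed: "seedF0 k a b c d e = (if seed_regular k a b c d e then Some (seed k a b c d e) else None)"
  by (simp add: seedF0_def seed_regular_def seed_def gamma_ratio_def ac_simps)

text \<open>As rational multiples of the seed, \<open>cert_a = (d+k-1)(e+k-1) / ((a-d+1)(a-e+1)) \<cdot> seed\<close> and
  \<open>cert_d = -(a+b+c-2d-e+1)(e+k-1)(a+b+c-d-e+1+k) / ((a+b-d-e+1)(a+c-d-e+1)(b+c-d-e+1)) \<cdot> seed\<close>;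
  written as Gamma ratios they are defined everywhere.\<close>

definition cert_a :: "complex \<Rightarrow> complex \<Rightarrow> complex \<Rightarrow> complex \<Rightarrow> complex \<Rightarrow> complex \<Rightarrow> complex" where
  "cert_a k a b c d e = gamma_ratio (d + e)
     [a + k, b + k, c + k, a + b - d - e + 2, a + c - d - e + 2, b + c - d - e + 2]
     [d + k - 1, e + k - 1, a + b + c - d - e + 2 + k,
      a - d + 2, a - e + 2, b - d + 1, b - e + 1, c - d + 1, c - e + 1]"

definition cert_b :: "complex \<Rightarrow> complex \<Rightarrow> complex \<Rightarrow> complex \<Rightarrow> complex \<Rightarrow> complex \<Rightarrow> complex" where
  "cert_b k a b c d e = gamma_ratio (d + e)
     [a + k, b + k, c + k, a + b - d - e + 2, a + c - d - e + 2, b + c - d - e + 2]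
     [d + k - 1, e + k - 1, a + b + c - d - e + 2 + k,
      a - d + 1, a - e + 1, b - d + 2, b - e + 2, c - d + 1, c - e + 1]"

definition cert_c :: "complex \<Rightarrow> complex \<Rightarrow> complex \<Rightarrow> complex \<Rightarrow> complex \<Rightarrow> complex \<Rightarrow> complex" where
  "cert_c k a b c d e = gamma_ratio (d + e)
     [a + k, b + k, c + k, a + b - d - e + 2, a + c - d - e + 2, b + c - d - e + 2]
     [d + k - 1, e + k - 1, a + b + c - d - e + 2 + k,
      a - d + 1, a - e + 1, b - d + 1, b - e + 1, c - d + 2, c - e + 2]"

definition cert_d :: "complex \<Rightarrow> complex \<Rightarrow> complex \<Rightarrow> complex \<Rightarrow> complex \<Rightarrow> complex \<Rightarrow> complex" where
  "cert_d k a b c d e = - (a + b + c - 2 * d - e + 1) * gamma_ratio (d + e)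
     [a + k, b + k, c + k, a + b - d - e + 1, a + c - d - e + 1, b + c - d - e + 1]
     [d + k, e + k - 1, a + b + c - d - e + 1 + k,
      a - d + 1, a - e + 1, b - d + 1, b - e + 1, c - d + 1, c - e + 1]"

definition cert_e :: "complex \<Rightarrow> complex \<Rightarrow> complex \<Rightarrow> complex \<Rightarrow> complex \<Rightarrow> complex \<Rightarrow> complex" where
  "cert_e k a b c d e = - (a + b + c - d - 2 * e + 1) * gamma_ratio (d + e)
     [a + k, b + k, c + k, a + b - d - e + 1, a + c - d - e + 1, b + c - d - e + 1]
     [d + k - 1, e + k, a + b + c - d - e + 1 + k,
      a - d + 1, a - e + 1, b - d + 1, b - e + 1, c - d + 1, c - e + 1]"

lemma Gamma_succ: "z \<notin> \<int>\<^sub>\<le>\<^sub>0 \<Longrightarrow> w = z + 1 \<Longrightarrow> Gamma w = z * Gamma z"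
  by (simp add: Gamma_plus1)

lemma rGamma_succ: "w = z + 1 \<Longrightarrow> rGamma z = z * rGamma w"
  by (simp add: rGamma_plus1)

lemma seed_diff_a:
  assumes "seed_regular k a b c d e"
  shows "seed k (a + 1) b c d e - seed k a b c d e =
    ((a + k) * (a + b - d - e + 2) * (a + c - d - e + 2)
      - (a + b + c - d - e + 2 + k) * (a - d + 1) * (a - e + 1)) *
    gamma_ratio (d + e) [a + k, b + k, c + k, a + b - d - e + 2, a + c - d - e + 2, b + c - d - e + 2]
      [d + k, e + k, a + b + c - d - e + 2 + k + 1, a - d + 2, a - e + 2, b - d + 1, b - e + 1,
       c - d + 1, c - e + 1]"
proof -
  define S where "S = a + b + c - d - e + 2 + k"
  define R where "R = gamma_ratio (d + e)
     [a + k, b + k, c + k, a + b - d - e + 2, a + c - d - e + 2, b + c - d - e + 2]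
     [d + k, e + k, S + 1, a - d + 2, a - e + 2, b - d + 1, b - e + 1, c - d + 1, c - e + 1]"
  have regular: "a + k \<notin> \<int>\<^sub>\<le>\<^sub>0" "a + b - d - e + 2 \<notin> \<int>\<^sub>\<le>\<^sub>0" "a + c - d - e + 2 \<notin> \<int>\<^sub>\<le>\<^sub>0"
    using assms unfolding seed_regular_def by auto
  have "seed k (a + 1) b c d e = (a + k) * (a + b - d - e + 2) * (a + c - d - e + 2) * R"
  proof -
    have "Gamma (a + 1 + k) = (a + k) * Gamma (a + k)"
      "Gamma (a + 1 + b - d - e + 2) = (a + b - d - e + 2) * Gamma (a + b - d - e + 2)"
      "Gamma (a + 1 + c - d - e + 2) = (a + c - d - e + 2) * Gamma (a + c - d - e + 2)"
      by (rule Gamma_succ, use regular in simp_all)+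
    moreover have "a + 1 + b + c - d - e + 2 + k = S + 1" "a + 1 - d + 1 = a - d + 2"
      "a + 1 - e + 1 = a - e + 2"
      by (simp_all add: S_def)
    ultimately show ?thesis
      unfolding seed_def R_def gamma_ratio_def by (simp only: list.map prod_list.Cons ac_simps)
  qed
  moreover have "seed k a b c d e = S * (a - d + 1) * (a - e + 1) * R"
  proof -
    have "rGamma S = S * rGamma (S + 1)" "rGamma (a - d + 1) = (a - d + 1) * rGamma (a - d + 2)"
      "rGamma (a - e + 1) = (a - e + 1) * rGamma (a - e + 2)"
      by (rule rGamma_succ, simp)+
    then show ?thesis
      unfolding seed_def R_def gamma_ratio_def S_def[symmetric]
      by (simp only: list.map prod_list.Cons ac_simps)
  qed
  ultimately show ?thesis
    unfolding S_def[symmetric] R_def[symmetric] by (simp only: left_diff_distrib)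
qed

lemma cert_a_diff:
  assumes "seed_regular k a b c d e"
  shows "cert_a (k + 1) a b c d e - cert_a k a b c d e =
    ((a + k) * (b + k) * (c + k) - (d + k - 1) * (e + k - 1) * (a + b + c - d - e + 2 + k)) *
    gamma_ratio (d + e) [a + k, b + k, c + k, a + b - d - e + 2, a + c - d - e + 2, b + c - d - e + 2]
      [d + k, e + k, a + b + c - d - e + 2 + k + 1, a - d + 2, a - e + 2, b - d + 1, b - e + 1,
       c - d + 1, c - e + 1]"
proof -
  define S where "S = a + b + c - d - e + 2 + k"
  define R where "R = gamma_ratio (d + e)
     [a + k, b + k, c + k, a + b - d - e + 2, a + c - d - e + 2, b + c - d - e + 2]
     [d + k, e + k, S + 1, a - d + 2, a - e + 2, b - d + 1, b - e + 1, c - d + 1, c - e + 1]"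
  have regular: "a + k \<notin> \<int>\<^sub>\<le>\<^sub>0" "b + k \<notin> \<int>\<^sub>\<le>\<^sub>0" "c + k \<notin> \<int>\<^sub>\<le>\<^sub>0"
    using assms unfolding seed_regular_def by auto
  have "cert_a (k + 1) a b c d e = (a + k) * (b + k) * (c + k) * R"
  proof -
    have "Gamma (a + (k + 1)) = (a + k) * Gamma (a + k)" "Gamma (b + (k + 1)) = (b + k) * Gamma (b + k)"
      "Gamma (c + (k + 1)) = (c + k) * Gamma (c + k)"
      by (rule Gamma_succ, use regular in simp_all)+
    moreover have "d + (k + 1) - 1 = d + k" "e + (k + 1) - 1 = e + k"
      "a + b + c - d - e + 2 + (k + 1) = S + 1"
      by (simp_all add: S_def)
    ultimately show ?thesis
      unfolding cert_a_def R_def gamma_ratio_def by (simp only: list.map prod_list.Cons ac_simps)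
  qed
  moreover have "cert_a k a b c d e = (d + k - 1) * (e + k - 1) * S * R"
  proof -
    have "rGamma S = S * rGamma (S + 1)" "rGamma (d + k - 1) = (d + k - 1) * rGamma (d + k)"
      "rGamma (e + k - 1) = (e + k - 1) * rGamma (e + k)"
      by (rule rGamma_succ, simp)+
    then show ?thesis
      unfolding cert_a_def R_def gamma_ratio_def S_def[symmetric]
      by (simp only: list.map prod_list.Cons ac_simps)
  qed
  ultimately show ?thesis
    unfolding S_def[symmetric] R_def[symmetric] by (simp only: left_diff_distrib)
qed

lemma seed_step_a:
  assumes "seed_regular k a b c d e"
  shows "seed k (a + 1) b c d e - seed k a b c d e = cert_a (k + 1) a b c d e - cert_a k a b c d e"
proof -
  have "(a + k) * (a + b - d - e + 2) * (a + c - d - e + 2)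
      - (a + b + c - d - e + 2 + k) * (a - d + 1) * (a - e + 1)
    = (a + k) * (b + k) * (c + k) - (d + k - 1) * (e + k - 1) * (a + b + c - d - e + 2 + k)"
    by algebra
  then show ?thesis
    unfolding seed_diff_a[OF assms] cert_a_diff[OF assms] by (rule arg_cong)
qed

lemma seed_diff_d:
  assumes "seed_regular k a b c (d + 1) e"
  shows "seed k a b c (d + 1) e - seed k a b c d e =
    - ((a + b + c - d - e + 1 + k) * (a - d) * (b - d) * (c - d)
      + (d + k) * (a + b - d - e + 1) * (a + c - d - e + 1) * (b + c - d - e + 1)) *
    gamma_ratio (d + e) [a + k, b + k, c + k, a + b - d - e + 1, a + c - d - e + 1, b + c - d - e + 1]
      [d + k + 1, e + k, a + b + c - d - e + 2 + k, a - d + 1, a - e + 1, b - d + 1, b - e + 1,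
       c - d + 1, c - e + 1]"
proof -
  define S where "S = a + b + c - d - e + 2 + k"
  define qab where "qab = a + b - d - e + 1"
  define qac where "qac = a + c - d - e + 1"
  define qbc where "qbc = b + c - d - e + 1"
  define R where "R = gamma_ratio (d + e) [a + k, b + k, c + k, qab, qac, qbc]
     [d + k + 1, e + k, S, a - d + 1, a - e + 1, b - d + 1, b - e + 1, c - d + 1, c - e + 1]"
  have shifted: "a + b - (d + 1) - e + 2 = qab" "a + c - (d + 1) - e + 2 = qac"
    "b + c - (d + 1) - e + 2 = qbc"
    by (simp_all add: qab_def qac_def qbc_def)
  have regular: "qab \<notin> \<int>\<^sub>\<le>\<^sub>0" "qac \<notin> \<int>\<^sub>\<le>\<^sub>0" "qbc \<notin> \<int>\<^sub>\<le>\<^sub>0"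
    using assms unfolding seed_regular_def shifted by auto
  have "seed k a b c (d + 1) e = - ((S - 1) * (a - d) * (b - d) * (c - d)) * R"
  proof -
    have "m1pow (d + 1 + e) = - m1pow (d + e)"
      using m1pow_add[of "d + e" 1] by (simp add: m1pow_def add_ac)
    moreover have "rGamma (S - 1) = (S - 1) * rGamma S" "rGamma (a - d) = (a - d) * rGamma (a - d + 1)"
      "rGamma (b - d) = (b - d) * rGamma (b - d + 1)" "rGamma (c - d) = (c - d) * rGamma (c - d + 1)"
      by (rule rGamma_succ, simp)+
    moreover have "d + 1 + k = d + k + 1" "a + b + c - (d + 1) - e + 2 + k = S - 1"
      "a - (d + 1) + 1 = a - d" "b - (d + 1) + 1 = b - d" "c - (d + 1) + 1 = c - d"
      by (simp_all add: S_def)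
    ultimately show ?thesis
      unfolding seed_def R_def gamma_ratio_def shifted by (simp only: list.map prod_list.Cons ac_simps) simp
  qed
  moreover have "seed k a b c d e = (d + k) * qab * qac * qbc * R"
  proof -
    have "rGamma (d + k) = (d + k) * rGamma (d + k + 1)" by (rule rGamma_succ) simp
    moreover have "Gamma (a + b - d - e + 2) = qab * Gamma qab" "Gamma (a + c - d - e + 2) = qac * Gamma qac"
      "Gamma (b + c - d - e + 2) = qbc * Gamma qbc"
      by (rule Gamma_succ, use regular in \<open>simp_all add: qab_def qac_def qbc_def\<close>)+
    ultimately show ?thesis
      unfolding seed_def R_def gamma_ratio_def S_def[symmetric]
      by (simp only: list.map prod_list.Cons ac_simps)
  qed
  ultimately show ?thesis
    unfolding S_def[symmetric] qab_def[symmetric] qac_def[symmetric] qbc_def[symmetric] R_def[symmetric]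
    by (simp add: S_def algebra_simps)
qed

lemma cert_d_diff:
  assumes "seed_regular k a b c (d + 1) e"
  shows "cert_d (k + 1) a b c d e - cert_d k a b c d e =
    - (a + b + c - 2 * d - e + 1) *
      ((a + k) * (b + k) * (c + k) - (d + k) * (e + k - 1) * (a + b + c - d - e + 1 + k)) *
    gamma_ratio (d + e) [a + k, b + k, c + k, a + b - d - e + 1, a + c - d - e + 1, b + c - d - e + 1]
      [d + k + 1, e + k, a + b + c - d - e + 2 + k, a - d + 1, a - e + 1, b - d + 1, b - e + 1,
       c - d + 1, c - e + 1]"
proof -
  define S where "S = a + b + c - d - e + 2 + k"
  define z where "z = a + b + c - d - e + 1 + k"
  define \<sigma> where "\<sigma> = a + b + c - 2 * d - e + 1"
  define R where "R = gamma_ratio (d + e)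
     [a + k, b + k, c + k, a + b - d - e + 1, a + c - d - e + 1, b + c - d - e + 1]
     [d + k + 1, e + k, S, a - d + 1, a - e + 1, b - d + 1, b - e + 1, c - d + 1, c - e + 1]"
  have regular: "a + k \<notin> \<int>\<^sub>\<le>\<^sub>0" "b + k \<notin> \<int>\<^sub>\<le>\<^sub>0" "c + k \<notin> \<int>\<^sub>\<le>\<^sub>0"
    using assms unfolding seed_regular_def by auto
  have "cert_d (k + 1) a b c d e = - \<sigma> * ((a + k) * (b + k) * (c + k)) * R"
  proof -
    have "Gamma (a + (k + 1)) = (a + k) * Gamma (a + k)" "Gamma (b + (k + 1)) = (b + k) * Gamma (b + k)"
      "Gamma (c + (k + 1)) = (c + k) * Gamma (c + k)"
      by (rule Gamma_succ, use regular in simp_all)+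
    moreover have "d + (k + 1) = d + k + 1" "e + (k + 1) - 1 = e + k"
      "a + b + c - d - e + 1 + (k + 1) = S"
      by (simp_all add: S_def)
    ultimately show ?thesis
      unfolding cert_d_def R_def gamma_ratio_def \<sigma>_def[symmetric] by (simp only: list.map prod_list.Cons ac_simps)
  qed
  moreover have "cert_d k a b c d e = - \<sigma> * ((d + k) * (e + k - 1) * z) * R"
  proof -
    have "rGamma (d + k) = (d + k) * rGamma (d + k + 1)" "rGamma (e + k - 1) = (e + k - 1) * rGamma (e + k)"
      "rGamma z = z * rGamma S"
      by (rule rGamma_succ, simp add: z_def S_def)+
    then show ?thesis
      unfolding cert_d_def R_def gamma_ratio_def z_def[symmetric] \<sigma>_def[symmetric]
      by (simp only: list.map prod_list.Cons ac_simps)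
  qed
  ultimately show ?thesis
    unfolding S_def[symmetric] z_def[symmetric] \<sigma>_def[symmetric] R_def[symmetric]
    by (simp add: algebra_simps)
qed

lemma seed_step_d:
  assumes "seed_regular k a b c (d + 1) e"
  shows "seed k a b c (d + 1) e - seed k a b c d e = cert_d (k + 1) a b c d e - cert_d k a b c d e"
proof -
  have "- ((a + b + c - d - e + 1 + k) * (a - d) * (b - d) * (c - d)
      + (d + k) * (a + b - d - e + 1) * (a + c - d - e + 1) * (b + c - d - e + 1))
    = - (a + b + c - 2 * d - e + 1) *
      ((a + k) * (b + k) * (c + k) - (d + k) * (e + k - 1) * (a + b + c - d - e + 1 + k))"
    by algebra
  then show ?thesis
    unfolding seed_diff_d[OF assms] cert_d_diff[OF assms] by (rule arg_cong)
qed

lemma seed_swap_ab: "seed k a b c d e = seed k b a c d e"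
  and seed_swap_ac: "seed k a b c d e = seed k c b a d e"
  and seed_swap_de: "seed k a b c d e = seed k a b c e d"
  and cert_b_swap: "cert_b k a b c d e = cert_a k b a c d e"
  and cert_c_swap: "cert_c k a b c d e = cert_a k c b a d e"
  and cert_e_swap: "cert_e k a b c d e = cert_d k a b c e d"
  unfolding seed_def cert_a_def cert_b_def cert_c_def cert_d_def cert_e_def gamma_ratio_def
  by (simp_all add: algebra_simps)

lemma seed_regular_swap_ab: "seed_regular k a b c d e = seed_regular k b a c d e"
  and seed_regular_swap_ac: "seed_regular k a b c d e = seed_regular k c b a d e"
  and seed_regular_swap_de: "seed_regular k a b c d e = seed_regular k a b c e d"
  unfolding seed_regular_def by (simp_all add: algebra_simps insert_commute)

lemma seed_step_b:
  "seed_regular k a b c d e \<Longrightarrow>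
    seed k a (b + 1) c d e - seed k a b c d e = cert_b (k + 1) a b c d e - cert_b k a b c d e"
  using seed_step_a[of k b a c d e] by (metis seed_swap_ab seed_regular_swap_ab cert_b_swap)

lemma seed_step_c:
  "seed_regular k a b c d e \<Longrightarrow>
    seed k a b (c + 1) d e - seed k a b c d e = cert_c (k + 1) a b c d e - cert_c k a b c d e"
  using seed_step_a[of k c b a d e] by (metis seed_swap_ac seed_regular_swap_ac cert_c_swap)

lemma seed_step_e:
  "seed_regular k a b c d (e + 1) \<Longrightarrow>
    seed k a b c d (e + 1) - seed k a b c d e = cert_e (k + 1) a b c d e - cert_e k a b c d e"
  using seed_step_d[of k a b c e d] by (metis seed_swap_de seed_regular_swap_de cert_e_swap)

section \<open>Specialisations\<close>

locale wz_specialisation =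
  fixes K A B C D E :: int and k0 a b c d e :: complex
  assumes regular: "\<And>n k. seed_regular (of_int K * of_int n + k0 + of_int k) (of_int A * of_int n + a)
    (of_int B * of_int n + b) (of_int C * of_int n + c) (of_int D * of_int n + d) (of_int E * of_int n + e)"
begin

fun shifted :: "(complex \<Rightarrow> complex \<Rightarrow> complex \<Rightarrow> complex \<Rightarrow> complex \<Rightarrow> complex \<Rightarrow> 'b)
    \<Rightarrow> int \<times> int \<times> int \<times> int \<times> int \<times> int \<Rightarrow> int \<Rightarrow> int \<Rightarrow> 'b" where
  "shifted f (sk, sa, sb, sc, sd, se) n k =
     f (of_int K * of_int n + k0 + of_int k + of_int sk) (of_int A * of_int n + a + of_int sa)
       (of_int B * of_int n + b + of_int sb) (of_int C * of_int n + c + of_int sc)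
       (of_int D * of_int n + d + of_int sd) (of_int E * of_int n + e + of_int se)"

definition M :: int where
  "M = \<bar>K\<bar> + \<bar>A\<bar> + \<bar>B\<bar> + \<bar>C\<bar> + \<bar>D\<bar> + \<bar>E\<bar>"

text \<open>Along the specialisation the numerator arguments \<open>a + b - d - e + 2\<close> etc. are known to avoid
  the poles only after integer shifts of at least \<open>0\<close> or \<open>A + B - D - E\<close> etc.; the bound \<open>M\<close>
  keeps all offsets within the range covered by \<open>base\<close> below.\<close>

fun admissible :: "int \<times> int \<times> int \<times> int \<times> int \<times> int \<Rightarrow> bool" where
  "admissible (sk, sa, sb, sc, sd, se) \<longleftrightarrow>
     \<bar>sk\<bar> \<le> M \<and> \<bar>sa\<bar> \<le> M \<and> \<bar>sb\<bar> \<le> M \<and> \<bar>sc\<bar> \<le> M \<and> \<bar>sd\<bar> \<le> M \<and> \<bar>se\<bar> \<le> M \<and>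
     min 0 (A + B - D - E) \<le> sa + sb - sd - se \<and> min 0 (A + C - D - E) \<le> sa + sc - sd - se \<and>
     min 0 (B + C - D - E) \<le> sb + sc - sd - se"

definition gamma_forms :: "(int \<Rightarrow> int \<Rightarrow> complex) list" where
  "gamma_forms = [affine_form (A + K) 1 (a + k0), affine_form (B + K) 1 (b + k0),
     affine_form (C + K) 1 (c + k0), affine_form (A + B - D - E) 0 (a + b - d - e + 2),
     affine_form (A + C - D - E) 0 (a + c - d - e + 2), affine_form (B + C - D - E) 0 (b + c - d - e + 2)]"

definition rgamma_forms :: "(int \<Rightarrow> int \<Rightarrow> complex) list" where
  "rgamma_forms = [affine_form (D + K) 1 (d + k0), affine_form (E + K) 1 (e + k0),
     affine_form (A + B + C - D - E + K) 1 (a + b + c - d - e + 2 + k0),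
     affine_form (A - D) 0 (a - d + 1), affine_form (A - E) 0 (a - e + 1),
     affine_form (B - D) 0 (b - d + 1), affine_form (B - E) 0 (b - e + 1),
     affine_form (C - D) 0 (c - d + 1), affine_form (C - E) 0 (c - e + 1)]"

definition shifted_ratio :: "int \<Rightarrow> int list \<Rightarrow> int list \<Rightarrow> int \<Rightarrow> int \<Rightarrow> complex" where
  "shifted_ratio w gs rs n k = gamma_ratio (affine_form (D + E) 0 (d + e) n k + of_int w)
     (map2 (\<lambda>y j. y n k + of_int j) gamma_forms gs) (map2 (\<lambda>y j. y n k + of_int j) rgamma_forms rs)"

lemma shifted_seed:
  "shifted seed (sk, sa, sb, sc, sd, se) = shifted_ratio (sd + se)
     [sa + sk, sb + sk, sc + sk, sa + sb - sd - se, sa + sc - sd - se, sb + sc - sd - se]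
     [sd + sk, se + sk, sa + sb + sc - sd - se + sk, sa - sd, sa - se, sb - sd, sb - se, sc - sd, sc - se]"
  by (simp add: fun_eq_iff seed_def shifted_ratio_def gamma_forms_def rgamma_forms_def
      affine_form_def algebra_simps)

lemma shifted_cert_a:
  "shifted cert_a (sk, sa, sb, sc, sd, se) = shifted_ratio (sd + se)
     [sa + sk, sb + sk, sc + sk, sa + sb - sd - se, sa + sc - sd - se, sb + sc - sd - se]
     [sd + sk - 1, se + sk - 1, sa + sb + sc - sd - se + sk,
      sa - sd + 1, sa - se + 1, sb - sd, sb - se, sc - sd, sc - se]"
  by (simp add: fun_eq_iff cert_a_def shifted_ratio_def gamma_forms_def rgamma_forms_def
      affine_form_def algebra_simps)

lemma shifted_cert_b:
  "shifted cert_b (sk, sa, sb, sc, sd, se) = shifted_ratio (sd + se)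
     [sa + sk, sb + sk, sc + sk, sa + sb - sd - se, sa + sc - sd - se, sb + sc - sd - se]
     [sd + sk - 1, se + sk - 1, sa + sb + sc - sd - se + sk,
      sa - sd, sa - se, sb - sd + 1, sb - se + 1, sc - sd, sc - se]"
  by (simp add: fun_eq_iff cert_b_def shifted_ratio_def gamma_forms_def rgamma_forms_def
      affine_form_def algebra_simps)

lemma shifted_cert_c:
  "shifted cert_c (sk, sa, sb, sc, sd, se) = shifted_ratio (sd + se)
     [sa + sk, sb + sk, sc + sk, sa + sb - sd - se, sa + sc - sd - se, sb + sc - sd - se]
     [sd + sk - 1, se + sk - 1, sa + sb + sc - sd - se + sk,
      sa - sd, sa - se, sb - sd, sb - se, sc - sd + 1, sc - se + 1]"
  by (simp add: fun_eq_iff cert_c_def shifted_ratio_def gamma_forms_def rgamma_forms_def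
      affine_form_def algebra_simps)

lemma shifted_cert_d:
  "shifted cert_d (sk, sa, sb, sc, sd, se) = (\<lambda>n k.
     - shifted (\<lambda>k a b c d e. a + b + c - 2 * d - e + 1) (sk, sa, sb, sc, sd, se) n k *
     shifted_ratio (sd + se)
       [sa + sk, sb + sk, sc + sk, sa + sb - sd - se - 1, sa + sc - sd - se - 1, sb + sc - sd - se - 1]
       [sd + sk, se + sk - 1, sa + sb + sc - sd - se + sk - 1,
        sa - sd, sa - se, sb - sd, sb - se, sc - sd, sc - se] n k)"
  unfolding fun_eq_iff shifted.simps cert_d_def
  by (intro allI arg_cong2[where f = "(*)"] refl)
    (simp add: shifted_ratio_def gamma_forms_def rgamma_forms_def affine_form_def algebra_simps)

lemma shifted_cert_e:
  "shifted cert_e (sk, sa, sb, sc, sd, se) = (\<lambda>n k.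
     - shifted (\<lambda>k a b c d e. a + b + c - d - 2 * e + 1) (sk, sa, sb, sc, sd, se) n k *
     shifted_ratio (sd + se)
       [sa + sk, sb + sk, sc + sk, sa + sb - sd - se - 1, sa + sc - sd - se - 1, sb + sc - sd - se - 1]
       [sd + sk - 1, se + sk, sa + sb + sc - sd - se + sk - 1,
        sa - sd, sa - se, sb - sd, sb - se, sc - sd, sc - se] n k)"
  unfolding fun_eq_iff shifted.simps cert_e_def
  by (intro allI arg_cong2[where f = "(*)"] refl)
    (simp add: shifted_ratio_def gamma_forms_def rgamma_forms_def affine_form_def algebra_simps)

lemma regular_forms:
  shows "affine_form (A + K) 1 (a + k0) n k + of_int j \<notin> \<int>\<^sub>\<le>\<^sub>0"
    and "affine_form (B + K) 1 (b + k0) n k + of_int j \<notin> \<int>\<^sub>\<le>\<^sub>0"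
    and "affine_form (C + K) 1 (c + k0) n k + of_int j \<notin> \<int>\<^sub>\<le>\<^sub>0"
    and "min 0 (A + B - D - E) \<le> j \<Longrightarrow>
      affine_form (A + B - D - E) 0 (a + b - d - e + 2) n k + of_int j \<notin> \<int>\<^sub>\<le>\<^sub>0"
    and "min 0 (A + C - D - E) \<le> j \<Longrightarrow>
      affine_form (A + C - D - E) 0 (a + c - d - e + 2) n k + of_int j \<notin> \<int>\<^sub>\<le>\<^sub>0"
    and "min 0 (B + C - D - E) \<le> j \<Longrightarrow>
      affine_form (B + C - D - E) 0 (b + c - d - e + 2) n k + of_int j \<notin> \<int>\<^sub>\<le>\<^sub>0"
proof -
  have unshifted: "affine_form (A + K) 1 (a + k0) n k \<notin> \<int>\<^sub>\<le>\<^sub>0"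
    "affine_form (B + K) 1 (b + k0) n k \<notin> \<int>\<^sub>\<le>\<^sub>0" "affine_form (C + K) 1 (c + k0) n k \<notin> \<int>\<^sub>\<le>\<^sub>0"
    "affine_form (A + B - D - E) 0 (a + b - d - e + 2) n k \<notin> \<int>\<^sub>\<le>\<^sub>0"
    "affine_form (A + C - D - E) 0 (a + c - d - e + 2) n k \<notin> \<int>\<^sub>\<le>\<^sub>0"
    "affine_form (B + C - D - E) 0 (b + c - d - e + 2) n k \<notin> \<int>\<^sub>\<le>\<^sub>0" for n k
    using regular[of n k] by (simp_all add: seed_regular_def affine_form_def algebra_simps)
  show "affine_form (A + K) 1 (a + k0) n k + of_int j \<notin> \<int>\<^sub>\<le>\<^sub>0"
    "affine_form (B + K) 1 (b + k0) n k + of_int j \<notin> \<int>\<^sub>\<le>\<^sub>0"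
    "affine_form (C + K) 1 (c + k0) n k + of_int j \<notin> \<int>\<^sub>\<le>\<^sub>0"
    unfolding affine_form_shift_k by (rule unshifted)+
  show "min 0 (A + B - D - E) \<le> j \<Longrightarrow>
      affine_form (A + B - D - E) 0 (a + b - d - e + 2) n k + of_int j \<notin> \<int>\<^sub>\<le>\<^sub>0"
    "min 0 (A + C - D - E) \<le> j \<Longrightarrow>
      affine_form (A + C - D - E) 0 (a + c - d - e + 2) n k + of_int j \<notin> \<int>\<^sub>\<le>\<^sub>0"
    "min 0 (B + C - D - E) \<le> j \<Longrightarrow>
      affine_form (B + C - D - E) 0 (b + c - d - e + 2) n k + of_int j \<notin> \<int>\<^sub>\<le>\<^sub>0"
    by (rule affine_form_shift_notin_nonpos_Ints, rule unshifted, assumption)+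
qed

text \<open>Every shifted seed and certificate at an admissible offset is a polynomial multiple of \<open>base\<close>:
  its numerator Gamma functions are shifted down and its reciprocal ones up as far as admissible
  offsets ever reach.\<close>

definition L :: int where
  "L = 6 * M + 1"

definition base :: "int \<Rightarrow> int \<Rightarrow> complex" where
  "base = shifted_ratio 0 [- L, - L, - L, min 0 (A + B - D - E), min 0 (A + C - D - E), min 0 (B + C - D - E)]
     [L, L, L, L, L, L, L, L, L]"

lemma poly_multiple_shifted_ratio:
  assumes "list_all2 (\<le>) [- L, - L, - L, min 0 (A + B - D - E), min 0 (A + C - D - E), min 0 (B + C - D - E)] gs"
    and "list_all2 (\<le>) rs [L, L, L, L, L, L, L, L, L]"
  shows "poly_multiple (shifted_ratio w gs rs) base"
  unfolding shifted_ratio_def[abs_def] base_def gamma_ratio_def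
proof (intro poly_multiple_mult)
  show "poly_multiple (\<lambda>n k. m1pow (affine_form (D + E) 0 (d + e) n k + of_int w))
      (\<lambda>n k. m1pow (affine_form (D + E) 0 (d + e) n k + of_int 0))"
    by (rule poly_multiple_m1pow_shift)
  show "poly_multiple (\<lambda>n k. \<Prod>g\<leftarrow>map2 (\<lambda>y j. y n k + of_int j) gamma_forms gs. Gamma g)
      (\<lambda>n k. \<Prod>g\<leftarrow>map2 (\<lambda>y j. y n k + of_int j) gamma_forms
        [- L, - L, - L, min 0 (A + B - D - E), min 0 (A + C - D - E), min 0 (B + C - D - E)]. Gamma g)"
    using assms(1)
    by (intro poly_multiple_prod_Gamma_shift) (simp_all add: gamma_forms_def polyfun2_affine_form regular_forms)
  show "poly_multiple (\<lambda>n k. \<Prod>r\<leftarrow>map2 (\<lambda>y j. y n k + of_int j) rgamma_forms rs. rGamma r)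
      (\<lambda>n k. \<Prod>r\<leftarrow>map2 (\<lambda>y j. y n k + of_int j) rgamma_forms [L, L, L, L, L, L, L, L, L]. rGamma r)"
    using assms(2)
    by (intro poly_multiple_prod_rGamma_shift) (simp_all add: rgamma_forms_def polyfun2_affine_form)
qed

lemma hypergeometric_n_base: "hypergeometric_n base"
  and hypergeometric_n_base_swap: "hypergeometric_n (\<lambda>n k. base k n)"
proof -
  note forms = regular_forms[unfolded affine_form_add_const]
  show "hypergeometric_n base"
    unfolding base_def shifted_ratio_def[abs_def] gamma_forms_def rgamma_forms_def gamma_ratio_def
    by (simp only: list.map zip_Cons_Cons zip_Nil prod_list.Cons prod_list.Nil mult_1_right
        case_prod_conv affine_form_add_const)
      (intro hypergeometric_n_mult hypergeometric_n_m1pow hypergeometric_n_rGamma hypergeometric_n_Gamma,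
        simp_all only: forms order_refl not_False_eq_True)
  show "hypergeometric_n (\<lambda>n k. base k n)"
    unfolding base_def shifted_ratio_def[abs_def] gamma_forms_def rgamma_forms_def gamma_ratio_def
    by (simp only: list.map zip_Cons_Cons zip_Nil prod_list.Cons prod_list.Nil mult_1_right
        case_prod_conv affine_form_add_const)
      (intro hypergeometric_n_mult hypergeometric_n_m1pow_swap hypergeometric_n_rGamma_swap
        hypergeometric_n_Gamma_swap, simp_all only: forms order_refl not_False_eq_True)
qed

lemma regular_shifted:
  assumes "admissible (sk, sa, sb, sc, sd, se)"
  shows "shifted seed_regular (sk, sa, sb, sc, sd, se) n k"
proof -
  have args: "shifted seed_regular (sk, sa, sb, sc, sd, se) n k \<longleftrightarrow>
    affine_form (A + K) 1 (a + k0) n k + of_int (sa + sk) \<notin> \<int>\<^sub>\<le>\<^sub>0 \<and>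
    affine_form (B + K) 1 (b + k0) n k + of_int (sb + sk) \<notin> \<int>\<^sub>\<le>\<^sub>0 \<and>
    affine_form (C + K) 1 (c + k0) n k + of_int (sc + sk) \<notin> \<int>\<^sub>\<le>\<^sub>0 \<and>
    affine_form (A + B - D - E) 0 (a + b - d - e + 2) n k + of_int (sa + sb - sd - se) \<notin> \<int>\<^sub>\<le>\<^sub>0 \<and>
    affine_form (A + C - D - E) 0 (a + c - d - e + 2) n k + of_int (sa + sc - sd - se) \<notin> \<int>\<^sub>\<le>\<^sub>0 \<and>
    affine_form (B + C - D - E) 0 (b + c - d - e + 2) n k + of_int (sb + sc - sd - se) \<notin> \<int>\<^sub>\<le>\<^sub>0"
    by (simp add: seed_regular_def affine_form_def algebra_simps)
  show ?thesis
    by (intro iffD2[OF args] conjI regular_forms) (use assms in auto)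
qed

lemma admissible_bounds:
  assumes "admissible (sk, sa, sb, sc, sd, se)"
  shows "- M \<le> sk" "sk \<le> M" "- M \<le> sa" "sa \<le> M" "- M \<le> sb" "sb \<le> M" "- M \<le> sc" "sc \<le> M"
    "- M \<le> sd" "sd \<le> M" "- M \<le> se" "se \<le> M"
  using assms by (simp_all add: abs_le_iff)

lemma poly_multiple_shifted_seed:
  assumes "admissible (sk, sa, sb, sc, sd, se)"
  shows "poly_multiple (shifted seed (sk, sa, sb, sc, sd, se)) base"
  unfolding shifted_seed
  by (rule poly_multiple_shifted_ratio) (use assms admissible_bounds[OF assms] in \<open>simp_all add: L_def\<close>)

lemma poly_multiple_shifted_cert_a:
  assumes "admissible (sk, sa, sb, sc, sd, se)"
  shows "poly_multiple (shifted cert_a (sk, sa, sb, sc, sd, se)) base"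
  unfolding shifted_cert_a
  by (rule poly_multiple_shifted_ratio) (use assms admissible_bounds[OF assms] in \<open>simp_all add: L_def\<close>)

lemma poly_multiple_shifted_cert_b:
  assumes "admissible (sk, sa, sb, sc, sd, se)"
  shows "poly_multiple (shifted cert_b (sk, sa, sb, sc, sd, se)) base"
  unfolding shifted_cert_b
  by (rule poly_multiple_shifted_ratio) (use assms admissible_bounds[OF assms] in \<open>simp_all add: L_def\<close>)

lemma poly_multiple_shifted_cert_c:
  assumes "admissible (sk, sa, sb, sc, sd, se)"
  shows "poly_multiple (shifted cert_c (sk, sa, sb, sc, sd, se)) base"
  unfolding shifted_cert_c
  by (rule poly_multiple_shifted_ratio) (use assms admissible_bounds[OF assms] in \<open>simp_all add: L_def\<close>)

lemma poly_multiple_shifted_cert_d: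
  assumes "admissible (sk, sa, sb, sc, sd, se)" "admissible (sk, sa, sb, sc, sd + 1, se)"
  shows "poly_multiple (shifted cert_d (sk, sa, sb, sc, sd, se)) base"
  unfolding shifted_cert_d
  by (intro poly_multiple_scale poly_multiple_shifted_ratio)
    (use assms admissible_bounds[OF assms(1)] in \<open>simp_all add: L_def\<close>,
      intro polyfun2.intros polyfun2_diff)

lemma poly_multiple_shifted_cert_e:
  assumes "admissible (sk, sa, sb, sc, sd, se)" "admissible (sk, sa, sb, sc, sd, se + 1)"
  shows "poly_multiple (shifted cert_e (sk, sa, sb, sc, sd, se)) base"
  unfolding shifted_cert_e
  by (intro poly_multiple_scale poly_multiple_shifted_ratio)
    (use assms admissible_bounds[OF assms(1)] in \<open>simp_all add: L_def\<close>,
      intro polyfun2.intros polyfun2_diff)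

definition joined :: "int \<times> int \<times> int \<times> int \<times> int \<times> int \<Rightarrow> int \<times> int \<times> int \<times> int \<times> int \<times> int \<Rightarrow> bool" where
  "joined s t \<longleftrightarrow> k_exact base (\<lambda>n k. shifted seed t n k - shifted seed s n k)"

lemma joined_trans [trans]:
  assumes "joined r s" "joined s t"
  shows "joined r t"
proof -
  have "k_exact base (\<lambda>n k. (shifted seed s n k - shifted seed r n k) + (shifted seed t n k - shifted seed s n k))"
    using assms unfolding joined_def by (rule k_exact_add)
  then show ?thesis unfolding joined_def by simp
qed

lemma joined_sym:
  assumes "joined s t"
  shows "joined t s"
proof -
  have "k_exact base (\<lambda>n k. - (shifted seed t n k - shifted seed s n k))"
    using assms unfolding joined_def by (rule k_exact_uminus)
  then show ?thesis unfolding joined_def by simp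
qed

lemma joined_line:
  fixes \<sigma> :: "int \<Rightarrow> int \<times> int \<times> int \<times> int \<times> int \<times> int"
  assumes "\<And>j. min i i' \<le> j \<Longrightarrow> j < max i i' \<Longrightarrow> joined (\<sigma> j) (\<sigma> (j + 1))"
  shows "joined (\<sigma> i) (\<sigma> i')"
  using assms unfolding joined_def by (rule k_exact_telescope[where \<phi> = "\<lambda>j. shifted seed (\<sigma> j)"])

lemma shifted_succ:
  "shifted f (sk + 1, sa, sb, sc, sd, se) = shifted (\<lambda>k. f (k + 1)) (sk, sa, sb, sc, sd, se)"
  "shifted f (sk, sa + 1, sb, sc, sd, se) = shifted (\<lambda>k a. f k (a + 1)) (sk, sa, sb, sc, sd, se)"
  "shifted f (sk, sa, sb + 1, sc, sd, se) = shifted (\<lambda>k a b. f k a (b + 1)) (sk, sa, sb, sc, sd, se)"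
  "shifted f (sk, sa, sb, sc + 1, sd, se) = shifted (\<lambda>k a b c. f k a b (c + 1)) (sk, sa, sb, sc, sd, se)"
  "shifted f (sk, sa, sb, sc, sd + 1, se) = shifted (\<lambda>k a b c d. f k a b c (d + 1)) (sk, sa, sb, sc, sd, se)"
  "shifted f (sk, sa, sb, sc, sd, se + 1) = shifted (\<lambda>k a b c d e. f k a b c d (e + 1)) (sk, sa, sb, sc, sd, se)"
  by (simp_all add: fun_eq_iff add_ac)

lemma shifted_succ_k: "shifted f s n (k + 1) = shifted (\<lambda>k. f (k + 1)) s n k"
  by (cases s rule: prod_cases6) (simp add: add_ac)

lemma joined_stepI:
  assumes "poly_multiple (shifted f s) base" and "\<And>n k. shifted P s n k"
    and "\<And>k a b c d e. P k a b c d e \<Longrightarrow> g k a b c d e - seed k a b c d e = f (k + 1) a b c d e - f k a b c d e"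
    and "shifted seed t = shifted g s"
  shows "joined s t"
  unfolding joined_def
proof (rule k_exactI[OF assms(1)])
  fix n k
  show "shifted seed t n k - shifted seed s n k = shifted f s n (k + 1) - shifted f s n k"
    using assms(2)[of n k] assms(3) unfolding assms(4) shifted_succ_k
    by (cases s rule: prod_cases6) simp
qed

lemma joined_step_k:
  "admissible (sk, sa, sb, sc, sd, se) \<Longrightarrow> joined (sk, sa, sb, sc, sd, se) (sk + 1, sa, sb, sc, sd, se)"
  by (rule joined_stepI[OF poly_multiple_shifted_seed, where P = "\<lambda>k a b c d e. True"]) (simp_all add: shifted_succ)

lemma joined_step_a:
  "admissible (sk, sa, sb, sc, sd, se) \<Longrightarrow> joined (sk, sa, sb, sc, sd, se) (sk, sa + 1, sb, sc, sd, se)"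
  by (rule joined_stepI[OF poly_multiple_shifted_cert_a regular_shifted seed_step_a]) (simp_all add: shifted_succ)

lemma joined_step_b:
  "admissible (sk, sa, sb, sc, sd, se) \<Longrightarrow> joined (sk, sa, sb, sc, sd, se) (sk, sa, sb + 1, sc, sd, se)"
  by (rule joined_stepI[OF poly_multiple_shifted_cert_b regular_shifted seed_step_b]) (simp_all add: shifted_succ)

lemma joined_step_c:
  "admissible (sk, sa, sb, sc, sd, se) \<Longrightarrow> joined (sk, sa, sb, sc, sd, se) (sk, sa, sb, sc + 1, sd, se)"
  by (rule joined_stepI[OF poly_multiple_shifted_cert_c regular_shifted seed_step_c]) (simp_all add: shifted_succ)

lemma joined_step_d:
  assumes "admissible (sk, sa, sb, sc, sd, se)" "admissible (sk, sa, sb, sc, sd + 1, se)"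
  shows "joined (sk, sa, sb, sc, sd, se) (sk, sa, sb, sc, sd + 1, se)"
  using regular_shifted[OF assms(2)]
  by (intro joined_stepI[OF poly_multiple_shifted_cert_d[OF assms] _ seed_step_d]) (simp_all add: shifted_succ)

lemma joined_step_e:
  assumes "admissible (sk, sa, sb, sc, sd, se)" "admissible (sk, sa, sb, sc, sd, se + 1)"
  shows "joined (sk, sa, sb, sc, sd, se) (sk, sa, sb, sc, sd, se + 1)"
  using regular_shifted[OF assms(2)]
  by (intro joined_stepI[OF poly_multiple_shifted_cert_e[OF assms] _ seed_step_e]) (simp_all add: shifted_succ)

text \<open>Raising \<open>a, b, c\<close> and lowering \<open>d, e\<close> only increases the pair sums \<open>a + b - d - e\<close> etc.,
  so the coordinate path to this corner stays admissible.\<close>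

lemma joined_top:
  assumes "admissible (sk, sa, sb, sc, sd, se)"
  shows "joined (sk, sa, sb, sc, sd, se) (0, M, M, M, - M, - M)"
proof -
  note bounds = admissible_bounds[OF assms]
  have "joined (sk, sa, sb, sc, sd, se) (sk, M, sb, sc, sd, se)"
    by (rule joined_line[where \<sigma> = "\<lambda>j. (sk, j, sb, sc, sd, se)"], rule joined_step_a)
      (use assms bounds in \<open>auto simp: abs_le_iff\<close>)
  also have "joined \<dots> (sk, M, M, sc, sd, se)"
    by (rule joined_line[where \<sigma> = "\<lambda>j. (sk, M, j, sc, sd, se)"], rule joined_step_b)
      (use assms bounds in \<open>auto simp: abs_le_iff\<close>)
  also have "joined \<dots> (sk, M, M, M, sd, se)"
    by (rule joined_line[where \<sigma> = "\<lambda>j. (sk, M, M, j, sd, se)"], rule joined_step_c)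
      (use assms bounds in \<open>auto simp: abs_le_iff\<close>)
  also have "joined \<dots> (sk, M, M, M, - M, se)"
    by (rule joined_line[where \<sigma> = "\<lambda>j. (sk, M, M, M, j, se)"], rule joined_step_d)
      (use assms bounds in \<open>auto simp: abs_le_iff\<close>)
  also have "joined \<dots> (sk, M, M, M, - M, - M)"
    by (rule joined_line[where \<sigma> = "\<lambda>j. (sk, M, M, M, - M, j)"], rule joined_step_e)
      (use assms bounds in \<open>auto simp: abs_le_iff\<close>)
  also have "joined \<dots> (0, M, M, M, - M, - M)"
    by (rule joined_line[where \<sigma> = "\<lambda>j. (j, M, M, M, - M, - M)"], rule joined_step_k)
      (use assms bounds in \<open>auto simp: abs_le_iff\<close>)
  finally show ?thesis .
qed

lemma wz_mate_exists:
  "\<exists>G. wz_mate (\<lambda>n k. the (seedF0 (of_int K * of_int n + k0 + of_int k) (of_int A * of_int n + a)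
    (of_int B * of_int n + b) (of_int C * of_int n + c) (of_int D * of_int n + d) (of_int E * of_int n + e))) G"
proof -
  have "admissible (0, 0, 0, 0, 0, 0)" "admissible (K, A, B, C, D, E)"
    by (auto simp: M_def)
  then have "joined (0, 0, 0, 0, 0, 0) (K, A, B, C, D, E)"
    using joined_trans[OF joined_top joined_sym[OF joined_top]] by blast
  then obtain G where G: "poly_multiple G base"
    "\<And>n k. shifted seed (K, A, B, C, D, E) n k - shifted seed (0, 0, 0, 0, 0, 0) n k = G n (k + 1) - G n k"
    unfolding joined_def k_exact_def by auto
  have "hypergeometric2 G"
    using hypergeometric_n_base hypergeometric_n_base_swap G(1) by (rule hypergeometric2_poly_multiple)
  moreover have "shifted seed (K, A, B, C, D, E) n k = shifted seed (0, 0, 0, 0, 0, 0) (n + 1) k" for n k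
    by (simp add: algebra_simps)
  moreover have origin: "the (seedF0 (of_int K * of_int n + k0 + of_int k) (of_int A * of_int n + a)
      (of_int B * of_int n + b) (of_int C * of_int n + c) (of_int D * of_int n + d) (of_int E * of_int n + e))
    = shifted seed (0, 0, 0, 0, 0, 0) n k" for n k
    using regular[of n k] by (simp add: seedF0_eq_seed)
  ultimately show ?thesis
    unfolding wz_mate_def origin using G(2) by auto
qed

end

theorem theorem1:
  shows "wz_seed5 seedF0"
  unfolding wz_seed5_def Let_def
  by (intro allI impI wz_specialisation.wz_mate_exists wz_specialisation.intro)
    (auto simp: seedF0_eq_seed split: if_splits)

end
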